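(* Let $p$ be a prime and $f>1$ an integer, and let $l=f$ if $f$ is odd and $l=2f$ if $f$ is even. Define $\boldsymbol{\mu}=(\mu_0(x),\dots,\mu_{f-1}(x))$ by $\mu_0(x)=x-1$, $\mu_1(x)=p-2-x$, and $\mu_j(x)=p-1-x$ for $2\leq j\leq f-1$. Let $\boldsymbol{\mu}^{(0)}=(x,\dots,x)$ and $\boldsymbol{\mu}^{(k)}=g^{k-1}\boldsymbol{\mu}\circ g^{k-2}\boldsymbol{\mu}\circ\cdots\circ g\boldsymbol{\mu}\circ\boldsymbol{\mu}$ for $1\leq k\leq l$. For $0\leq k\leq l$ let $\boldsymbol{m}^{(k)}\in(\mathbb{Z}/2\mathbb{Z})^f$ be the tuple whose $j$-th entry is $0$ if the coefficient of $x$ in $\mu^{(k)}_j(x)$ is $+1$ and is $1$ if it is $-1$. Then: (1) for all $1\leq k\leq l$, $\boldsymbol{m}^{(k)}=g^k\boldsymbol{m}^{(l-k)}$; (2) for $1\leq k_1,k_2\leq l-1$ with $k_1\neq k_2$, the tuples $\boldsymbol{m}^{(k_1)}$ and $\boldsymbol{m}^{(k_2)}$ are cyclic permutations of each other if and only if $k_2=l-k_1$; (3) for $1\leq k\leq l-1$, with $k\neq l/2$ when $f$ is even, $\boldsymbol{m}^{(k)}$ is not equal to any of its non-trivial cyclic permutations.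
   Context: $(\mathbb{Z}\pm x)^f$ denotes the set of $f$-tuples $\boldsymbol{\lambda}=(\lambda_0(x),\dots,\lambda_{f-1}(x))$ of polynomials of the form $a\pm x$ with $a\in\mathbb{Z}$, indices taken in $\{0,\dots,f-1\}$. Composition is componentwise: $\boldsymbol{\lambda}\circ\boldsymbol{\lambda}'=(\lambda_0(\lambda'_0(x)),\dots,\lambda_{f-1}(\lambda'_{f-1}(x)))$. The cyclic shift $g$ acts on $f$-tuples (of polynomials or of elements of $\mathbb{Z}/2\mathbb{Z}$) by $(g\boldsymbol{\lambda})_j=\lambda_{j+1}$, indices modulo $f$. Equivalently, $\mu^{(k)}_j=\mu^{(k-1)}_j-1$ if $j\equiv 1-k \pmod f$, $\mu^{(k)}_j=p-2-\mu^{(k-1)}_j$ if $j\equiv 2-k\pmod f$, and $\mu^{(k)}_j=p-1-\mu^{(k-1)}_j$ otherwise. *)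

theory Defs
  imports Main "HOL-Computational_Algebra.Primes"
begin

text \<open>An element a + s*x of (Z \<pm> x) is represented by the pair (a, s) with s \<in> {1,-1}.
  f-tuples are lists of length f; the cyclic shift g is rotate1, so g^k = rotate k.\<close>

type_synonym linpoly = "int \<times> int"

definition lcomp :: "linpoly \<Rightarrow> linpoly \<Rightarrow> linpoly" where
  "lcomp l l' = (fst l + snd l * fst l', snd l * snd l')"

definition tcomp :: "linpoly list \<Rightarrow> linpoly list \<Rightarrow> linpoly list" where
  "tcomp xs ys = map2 lcomp xs ys"

definition mu :: "nat \<Rightarrow> nat \<Rightarrow> linpoly list" where
  "mu p f = map (\<lambda>j. if j = 0 then (-1, 1)
                     else if j = 1 then (int p - 2, -1)
                     else (int p - 1, -1)) [0..<f]"

fun mu_pow :: "nat \<Rightarrow> nat \<Rightarrow> nat \<Rightarrow> linpoly list" where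
  "mu_pow p f 0 = replicate f (0, 1)"
| "mu_pow p f (Suc k) = tcomp (rotate k (mu p f)) (mu_pow p f k)"

definition m_tup :: "nat \<Rightarrow> nat \<Rightarrow> nat \<Rightarrow> nat list" where
  "m_tup p f k = map (\<lambda>q. if snd q = 1 then 0 else 1) (mu_pow p f k)"

definition ell :: "nat \<Rightarrow> nat" where
  "ell f = (if odd f then f else 2 * f)"

end

theory Submission
  imports Defs
begin

(* The coefficient of x in mu^(k)_j is the product of the coefficients of the components
   mu_((j + t) mod f), t < k, and mu_0 is the only component with coefficient +1; the constant
   terms.  So m^(k)_j is the parity of k + c(k, j), where c(k, j) counts
   the t < k with f dvd j + t.  The count c is additive over consecutive windows and equals q
   on a window of length q f, so m^(k)_j + m^(l-k)_(j+k) is congruent to l + l/f, which is even: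
   this is (1).  For 0 < k <= f, m^(k) is a cyclic shift of a word made of a block of k equal
   letters followed by a block of f - k copies of the other letter, and for f < k < 2f it is by
   (1) a cyclic shift of m^(2f-k).  A word with two nonempty blocks has no nontrivial
   rotational symmetry, which gives (3), and the number of ones separates the rotation
   classes, which gives (2). *)

definition mu0_count :: "nat \<Rightarrow> nat \<Rightarrow> nat \<Rightarrow> nat" where
  "mu0_count f k j = card {t. t < k \<and> f dvd t + j}"

lemma mu0_count_0 [simp]: "mu0_count f 0 j = 0"
  by (simp add: mu0_count_def)

lemma mu0_count_Suc:
  "mu0_count f (Suc k) j = mu0_count f k j + (if f dvd k + j then 1 else 0)"
proof -
  have "{t. t < Suc k \<and> f dvd t + j} =
      (if f dvd k + j then insert k else id) {t. t < k \<and> f dvd t + j}"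
    by (auto simp: less_Suc_eq)
  then show ?thesis
    by (simp add: mu0_count_def)
qed

lemma mu0_count_add:
  "mu0_count f (a + b) j = mu0_count f a j + mu0_count f b (j + a)"
  by (induction b) (simp_all add: mu0_count_Suc ac_simps)

lemma mu0_count_mod: "mu0_count f k (j mod f) = mu0_count f k j"
  unfolding mu0_count_def dvd_eq_mod_eq_0 by (simp add: mod_add_right_eq)

lemma mu0_count_period:
  assumes "0 < f"
  shows "mu0_count f f j = 1"
proof (induction j)
  case 0
  have "{t. t < f \<and> f dvd t + 0} = {0}"
    using assms by (auto dest: dvd_imp_le)
  then show ?case
    by (simp add: mu0_count_def)
next
  case (Suc j)
  have "mu0_count f 1 j + mu0_count f f (Suc j) = mu0_count f f j + mu0_count f 1 (j + f)"
    using mu0_count_add[of f 1 f j] mu0_count_add[of f f 1 j] by simp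
  then show ?case
    using Suc.IH by (simp add: mu0_count_Suc)
qed

lemma mu0_count_mult_period:
  assumes "0 < f"
  shows "mu0_count f (q * f) j = q"
proof (induction q)
  case (Suc q)
  have "mu0_count f (q * f + f) j = mu0_count f (q * f) j + mu0_count f f (j + q * f)"
    by (rule mu0_count_add)
  then show ?case
    using Suc.IH mu0_count_period[OF assms] by (simp add: add.commute)
qed simp

lemma length_mu_pow [simp]: "length (mu_pow p f k) = f"
  by (induction k) (simp_all add: tcomp_def mu_def)

lemma length_m_tup [simp]: "length (m_tup p f k) = f"
  by (simp add: m_tup_def)

lemma snd_mu_pow_nth:
  assumes "j < f"
  shows "snd (mu_pow p f k ! j) = (-1) ^ (k + mu0_count f k j)"
proof (induction k)
  case (Suc k)
  have "snd (mu_pow p f (Suc k) ! j) = snd (mu p f ! ((k + j) mod f)) * snd (mu_pow p f k ! j)"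
    using assms by (simp add: tcomp_def lcomp_def nth_rotate mu_def del: upt_Suc)
  also have "snd (mu p f ! ((k + j) mod f)) = (if f dvd k + j then 1 else -1)"
    using assms by (simp add: mu_def dvd_eq_mod_eq_0)
  finally show ?case
    using Suc.IH by (simp add: mu0_count_Suc)
qed (simp add: assms)

lemma m_tup_nth:
  assumes "j < f"
  shows "m_tup p f k ! j = (k + mu0_count f k j) mod 2"
  using snd_mu_pow_nth[OF assms, of p k] assms
  by (simp add: m_tup_def minus_one_power_iff mod2_eq_if)

lemma m_tup_reflection:
  assumes "f dvd N" and "even (N + N div f)" and "k \<le> N"
  shows "m_tup p f k = rotate k (m_tup p f (N - k))"
proof (rule nth_equalityI)
  fix j
  assume "j < length (m_tup p f k)"
  then have j: "j < f"
    by simp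
  then have "0 < f"
    by simp
  have "mu0_count f k j + mu0_count f (N - k) ((k + j) mod f) = mu0_count f N j"
    using mu0_count_add[of f k "N - k" j] assms(3) by (simp add: mu0_count_mod add.commute)
  also have "\<dots> = N div f"
    using mu0_count_mult_period[OF \<open>0 < f\<close>, of "N div f" j] assms(1) by simp
  finally have "even ((k + mu0_count f k j) + (N - k + mu0_count f (N - k) ((k + j) mod f)))"
    using assms(2,3) by (simp add: algebra_simps)
  then show "m_tup p f k ! j = rotate k (m_tup p f (N - k)) ! j"
    using j by (simp add: nth_rotate m_tup_nth mod2_eq_if)
qed simp

lemma mu0_count_within_period:
  assumes "0 < k" and "k \<le> f" and "j < f"
  shows "mu0_count f k j = (if j = 0 \<or> f < k + j then 1 else 0)"
proof -
  have "f dvd t + j \<longleftrightarrow> t + j = 0 \<or> t + j = f" if "t < k" for t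
  proof
    assume "f dvd t + j"
    then obtain q where "t + j = f * q"
      by blast
    moreover from that assms have "t + j < f * 2"
      by simp
    ultimately have "q < 2"
      by simp
    then show "t + j = 0 \<or> t + j = f"
      using \<open>t + j = f * q\<close> by (auto simp: less_2_cases_iff)
  qed auto
  then have "{t. t < k \<and> f dvd t + j} = (if j = 0 \<or> f < k + j then {(f - j) mod f} else {})"
    using assms by auto
  then show ?thesis
    by (simp add: mu0_count_def)
qed

lemma m_tup_block_form:
  assumes "0 < k" and "k \<le> f"
  shows "m_tup p f k = rotate (k - 1) (replicate k (Suc k mod 2) @ replicate (f - k) (k mod 2))"
proof (rule nth_equalityI)
  fix j
  assume "j < length (m_tup p f k)"
  then have j: "j < f"
    by simp
  have "(k - 1 + j) mod f < k \<longleftrightarrow> j = 0 \<or> f < k + j"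
    using assms j by (cases "k - 1 + j < f") (auto simp: le_mod_geq)
  then show "m_tup p f k ! j =
      rotate (k - 1) (replicate k (Suc k mod 2) @ replicate (f - k) (k mod 2)) ! j"
    using assms j by (auto simp: m_tup_nth mu0_count_within_period nth_rotate nth_append mod2_eq_if)
qed (use assms in simp)

lemma mset_rotate [simp]: "mset (rotate n xs) = mset xs"
  by (metis append_take_drop_id mset_append rotate_drop_take union_commute)

lemma inj_rotate: "inj (rotate n)"
  unfolding rotate_def by (rule inj_fn[OF inj_rotate1])

lemma rotate_fixed_rotate_iff: "rotate i (rotate n xs) = rotate n xs \<longleftrightarrow> rotate i xs = xs"
  by (metis rotate_rotate add.commute inj_rotate injD)

lemma rotate_two_blocks_neq:
  assumes "x \<noteq> y" and "0 < a" and "0 < b" and "0 < i" and "i < a + b"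
  shows "rotate i (replicate a x @ replicate b y) \<noteq> replicate a x @ replicate b y"
proof
  let ?zs = "replicate a x @ replicate b y"
  assume fixed: "rotate i ?zs = ?zs"
  have nth_zs: "?zs ! q = (if q < a then x else y)" if "q < a + b" for q
    using that by (simp add: nth_append)
  have shift: "?zs ! ((i + j) mod (a + b)) = ?zs ! j" if "j < a + b" for j
    using nth_rotate[of j ?zs i] that by (simp add: fixed)
  have last_x: "?zs ! ((i + (a - 1)) mod (a + b)) = x" and first_y: "?zs ! ((i + a) mod (a + b)) = y"
    using shift[of "a - 1"] shift[of a] assms by (simp_all add: nth_zs)
  show False
  proof (cases "i + a < a + b")
    case True
    then show False
      using last_x assms by (simp add: nth_zs split: if_splits)
  next
    case False
    then show False
      using first_y assms by (simp add: nth_zs le_mod_geq split: if_splits)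
  qed
qed

lemma count_ones_m_tup:
  assumes "0 < k" and "k \<le> f"
  shows "count (mset (m_tup p f k)) 1 = (if even k then k else f - k)"
  using assms by (simp add: m_tup_block_form mod2_eq_if)

lemma m_tup_rotate_neq_within_period:
  assumes "0 < k" and "k < f" and "0 < i" and "i < f"
  shows "rotate i (m_tup p f k) \<noteq> m_tup p f k"
  using rotate_two_blocks_neq[of "Suc k mod 2" "k mod 2" k "f - k" i] assms
  by (simp add: m_tup_block_form rotate_fixed_rotate_iff mod2_eq_if)

lemma m_tup_ell_reflection:
  assumes "0 < f" and "k \<le> ell f"
  shows "m_tup p f k = rotate k (m_tup p f (ell f - k))"
  by (rule m_tup_reflection) (use assms in \<open>auto simp: ell_def\<close>)

lemma count_ones_m_tup_beyond_period:
  assumes "even f" and "f < k" and "k < 2 * f"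
  shows "count (mset (m_tup p f k)) 1 = (if even k then 2 * f - k else k - f)"
proof -
  have "m_tup p f k = rotate k (m_tup p f (2 * f - k))"
    using m_tup_ell_reflection[of f k p] assms by (simp add: ell_def)
  then show ?thesis
    using count_ones_m_tup[of "2 * f - k" f p] assms by simp
qed

lemma m_tup_ell_rotate_neq:
  assumes "0 < k" and "k < ell f" and "even f \<longrightarrow> 2 * k \<noteq> ell f" and "0 < i" and "i < f"
  shows "rotate i (m_tup p f k) \<noteq> m_tup p f k"
proof (cases "k < f")
  case True
  then show ?thesis
    using m_tup_rotate_neq_within_period assms by blast
next
  case False
  then have "even f" "f < k" "k < 2 * f"
    using assms by (auto simp: ell_def split: if_splits)
  then have "m_tup p f k = rotate k (m_tup p f (2 * f - k))"
    using m_tup_ell_reflection[of f k p] by (simp add: ell_def)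
  then show ?thesis
    using m_tup_rotate_neq_within_period[of "2 * f - k" f i p] assms \<open>f < k\<close> \<open>k < 2 * f\<close>
    by (simp add: rotate_fixed_rotate_iff)
qed

lemma m_tup_ell_rotation_equivalent_iff:
  assumes "0 < f" and "0 < k1" and "k1 < ell f" and "0 < k2" and "k2 < ell f" and "k1 \<noteq> k2"
  shows "(\<exists>i. rotate i (m_tup p f k1) = m_tup p f k2) \<longleftrightarrow> k2 = ell f - k1"
proof
  assume "\<exists>i. rotate i (m_tup p f k1) = m_tup p f k2"
  then have same_count: "count (mset (m_tup p f k1)) 1 = count (mset (m_tup p f k2)) 1"
    by (metis mset_rotate)
  show "k2 = ell f - k1"
  proof (cases "odd f")
    case True
    then have "k1 < f" "k2 < f"
      using assms by (simp_all add: ell_def)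
    then show ?thesis
      using same_count count_ones_m_tup[of k1 f p] count_ones_m_tup[of k2 f p] assms \<open>odd f\<close>
      by (auto simp: ell_def split: if_splits)
  next
    case False
    then have "k1 < 2 * f" "k2 < 2 * f"
      using assms by (simp_all add: ell_def)
    define weight where "weight k = (if k \<le> f then (if even k then k else f - k)
        else (if even k then 2 * f - k else k - f))" for k
    have count_eq: "count (mset (m_tup p f k)) 1 = weight k" if "0 < k" "k < 2 * f" for k
      using that False count_ones_m_tup[of k f p] count_ones_m_tup_beyond_period[of f k p]
      by (simp add: weight_def)
    have "even (weight k) \<longleftrightarrow> even k" if "k < 2 * f" for k
      using that False by (auto simp: weight_def even_diff_nat)
    then have "even k1 \<longleftrightarrow> even k2"
      using same_count count_eq assms \<open>k1 < 2 * f\<close> \<open>k2 < 2 * f\<close> by metis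
    then show ?thesis
      using same_count count_eq[of k1] count_eq[of k2] assms False \<open>k1 < 2 * f\<close> \<open>k2 < 2 * f\<close>
      by (auto simp: weight_def ell_def split: if_splits)
  qed
next
  assume "k2 = ell f - k1"
  then have "m_tup p f k2 = rotate k2 (m_tup p f k1)"
    using m_tup_ell_reflection[of f k2 p] assms by simp
  then show "\<exists>i. rotate i (m_tup p f k1) = m_tup p f k2"
    by metis
qed

theorem lemma2p1:
  fixes p f :: nat
  assumes "prime p" and "f > 1"
  shows "(\<forall>k. 1 \<le> k \<and> k \<le> ell f \<longrightarrow> m_tup p f k = rotate k (m_tup p f (ell f - k)))
    \<and> (\<forall>k1 k2. 1 \<le> k1 \<and> k1 \<le> ell f - 1 \<and> 1 \<le> k2 \<and> k2 \<le> ell f - 1 \<and> k1 \<noteq> k2 \<longrightarrow>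
          ((\<exists>i. rotate i (m_tup p f k1) = m_tup p f k2) \<longleftrightarrow> k2 = ell f - k1))
    \<and> (\<forall>k. 1 \<le> k \<and> k \<le> ell f - 1 \<and> (even f \<longrightarrow> 2 * k \<noteq> ell f) \<longrightarrow>
          (\<forall>i. 0 < i \<and> i < f \<longrightarrow> rotate i (m_tup p f k) \<noteq> m_tup p f k))"
proof -
  have "0 < f"
    using assms(2) by simp
  then have "0 < ell f"
    by (simp add: ell_def)
  show ?thesis
  proof (intro conjI allI impI)
    fix k
    assume "1 \<le> k \<and> k \<le> ell f"
    then show "m_tup p f k = rotate k (m_tup p f (ell f - k))"
      using m_tup_ell_reflection \<open>0 < f\<close> by blast
  next
    fix k1 k2
    assume k: "1 \<le> k1 \<and> k1 \<le> ell f - 1 \<and> 1 \<le> k2 \<and> k2 \<le> ell f - 1 \<and> k1 \<noteq> k2"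
    show "(\<exists>i. rotate i (m_tup p f k1) = m_tup p f k2) \<longleftrightarrow> k2 = ell f - k1"
      by (rule m_tup_ell_rotation_equivalent_iff) (use k \<open>0 < f\<close> \<open>0 < ell f\<close> in auto)
  next
    fix k i
    assume k: "1 \<le> k \<and> k \<le> ell f - 1 \<and> (even f \<longrightarrow> 2 * k \<noteq> ell f)" and i: "0 < i \<and> i < f"
    show "rotate i (m_tup p f k) \<noteq> m_tup p f k"
      by (rule m_tup_ell_rotate_neq) (use k i \<open>0 < ell f\<close> in auto)
  qed
qed

end
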